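(* Let $n\ge 3$ and let $L^B$ be a blow-up of the Boolean lattice $L\cong\mathbf{2}^n$. Then: (1) $L^B$ and its dual lattice $(L^B)^{\partial}$ are both pseudocomplemented; (2) $[L^B]\cong[(L^B)^{\partial}]\cong L\cong \mathbf{2}^n$; (3) for $a,b\in L^B$, $a^{\perp}=b^{\perp}$ if and only if $a^*=b^*$, where $a^*,b^*$ denote the pseudocomplements of $a,b$ in $L^B$.
   Context: Blow-up: Let $L\cong\mathbf{2}^n$ be a Boolean lattice with atoms $q_1,\dots,q_n$. A blow-up $L^B$ of $L$ is obtained by replacing each element $a\in L\setminus\{0,1\}$ by a finite chain $C_a$: $a=a^{1}\lessdot a^{2}\lessdot\cdots\lessdot a^{k_a}$ ($k_a\ge1$), keeping $0$ and $1$ as single elements; the order is: elements of the same chain $C_a$ are ordered along the chain, and for $u\in C_a$, $v\in C_b$ with $a\neq b$ (where $C_0=\{0\}$, $C_1=\{1\}$), $u\le v$ iff $a<b$ in $L$. In a poset $P$ with $0$, $a^{\perp}=\{b\in P:\{a,b\}^{\ell}=\{0\}\}$, where $\{a,b\}^\ell$ is the set of common lower bounds. The pseudocomplement $a^*$ of $a$ is the (unique if it exists) element with $\{a,a^*\}^{\ell}=\{0\}$ and such that $\{a,x\}^{\ell}=\{0\}$ implies $x\le a^*$; $P$ is pseudocomplemented if every element has one. For a lattice $M$ with $0$, $x\sim y$ iff $x^{\perp}=y^{\perp}$; $[x]$ is the class of $x$, and $[M]=\{[x]:x\in M\}$ is ordered by $[a]\le[b]$ iff $b^{\perp}\subseteq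 a^{\perp}$. *)

theory Defs
  imports Main
begin

definition lower_bounds :: "'a set \<Rightarrow> ('a \<Rightarrow> 'a \<Rightarrow> bool) \<Rightarrow> 'a set \<Rightarrow> 'a set" where
  "lower_bounds P le S = {x \<in> P. \<forall>s\<in>S. le x s}"

definition perp :: "'a set \<Rightarrow> ('a \<Rightarrow> 'a \<Rightarrow> bool) \<Rightarrow> 'a \<Rightarrow> 'a \<Rightarrow> 'a set" where
  "perp P le z a = {b \<in> P. lower_bounds P le {a, b} = {z}}"

definition is_pseudocomplement :: "'a set \<Rightarrow> ('a \<Rightarrow> 'a \<Rightarrow> bool) \<Rightarrow> 'a \<Rightarrow> 'a \<Rightarrow> 'a \<Rightarrow> bool" where
  "is_pseudocomplement P le z a c \<longleftrightarrow>
     c \<in> P \<and> lower_bounds P le {a, c} = {z} \<and>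
     (\<forall>x\<in>P. lower_bounds P le {a, x} = {z} \<longrightarrow> le x c)"

definition pseudocomplemented :: "'a set \<Rightarrow> ('a \<Rightarrow> 'a \<Rightarrow> bool) \<Rightarrow> 'a \<Rightarrow> bool" where
  "pseudocomplemented P le z \<longleftrightarrow> (\<forall>a\<in>P. \<exists>c. is_pseudocomplement P le z a c)"

definition pcompl :: "'a set \<Rightarrow> ('a \<Rightarrow> 'a \<Rightarrow> bool) \<Rightarrow> 'a \<Rightarrow> 'a \<Rightarrow> 'a" where
  "pcompl P le z a = (THE c. is_pseudocomplement P le z a c)"

definition perp_class :: "'a set \<Rightarrow> ('a \<Rightarrow> 'a \<Rightarrow> bool) \<Rightarrow> 'a \<Rightarrow> 'a \<Rightarrow> 'a set" where
  "perp_class P le z x = {y \<in> P. perp P le z y = perp P le z x}"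

definition perp_classes :: "'a set \<Rightarrow> ('a \<Rightarrow> 'a \<Rightarrow> bool) \<Rightarrow> 'a \<Rightarrow> 'a set set" where
  "perp_classes P le z = perp_class P le z ` P"

definition class_le :: "'a set \<Rightarrow> ('a \<Rightarrow> 'a \<Rightarrow> bool) \<Rightarrow> 'a \<Rightarrow> 'a set \<Rightarrow> 'a set \<Rightarrow> bool" where
  "class_le P le z X Y \<longleftrightarrow> (\<forall>a\<in>X. \<forall>b\<in>Y. perp P le z b \<subseteq> perp P le z a)"

definition order_isomorphic :: "'a set \<Rightarrow> ('a \<Rightarrow> 'a \<Rightarrow> bool) \<Rightarrow> 'b set \<Rightarrow> ('b \<Rightarrow> 'b \<Rightarrow> bool) \<Rightarrow> bool" where
  "order_isomorphic A leA B leB \<longleftrightarrow>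
     (\<exists>f. bij_betw f A B \<and> (\<forall>x\<in>A. \<forall>y\<in>A. leA x y \<longleftrightarrow> leB (f x) (f y)))"

text \<open>L = 2^n is modelled as the powerset of {0..<n} ordered by inclusion
  (atoms q_i = {i}). A blow-up is determined by chain lengths k A >= 1 for
  A \<noteq> {}, {0..<n}; the element a^i of chain C_a is the pair (a, i), 1 <= i <= k a;
  0 and 1 are the single elements ({},1) and ({0..<n},1).\<close>

definition boolean_carrier :: "nat \<Rightarrow> nat set set" where
  "boolean_carrier n = Pow {..<n}"

definition chain_len :: "nat \<Rightarrow> (nat set \<Rightarrow> nat) \<Rightarrow> nat set \<Rightarrow> nat" where
  "chain_len n k A = (if A = {} \<or> A = {..<n} then 1 else k A)"

definition blowup_carrier :: "nat \<Rightarrow> (nat set \<Rightarrow> nat) \<Rightarrow> (nat set \<times> nat) set" where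
  "blowup_carrier n k = {(A, i). A \<subseteq> {..<n} \<and> 1 \<le> i \<and> i \<le> chain_len n k A}"

definition blowup_le :: "nat set \<times> nat \<Rightarrow> nat set \<times> nat \<Rightarrow> bool" where
  "blowup_le u v \<longleftrightarrow> (fst u = fst v \<and> snd u \<le> snd v) \<or> fst u \<subset> fst v"

definition blowup_bot :: "nat set \<times> nat" where
  "blowup_bot = ({}, 1)"

definition blowup_top :: "nat \<Rightarrow> nat set \<times> nat" where
  "blowup_top n = ({..<n}, 1)"

definition blowup_dual_le :: "nat set \<times> nat \<Rightarrow> nat set \<times> nat \<Rightarrow> bool" where
  "blowup_dual_le u v \<longleftrightarrow> blowup_le v u"

end

theory Submission
  imports Defs
begin

text \<open>A blow-up only refines each Boolean element into a chain, and this does not affect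
  disjointness: \<open>(A, i)\<close> and \<open>(B, j)\<close> have a nonzero common lower bound iff
  \<open>A \<inter> B \<noteq> {}\<close>, a witness being \<open>(A \<inter> B, 1)\<close>; dually they have a common upper
  bound below the top iff \<open>A \<union> B\<close> is not everything. Hence \<open>a\<^sup>\<perp>\<close> depends only on
  the underlying set of \<open>a\<close>, and inclusion of these sets (of their complements in the dual)
  orders the classes like \<open>2\<^sup>n\<close>. The pseudocomplement of \<open>(A, i)\<close> is the top of the chain
  over the complement of \<open>A\<close>, the dual one is its bottom. Finally, in any pseudocomplemented
  poset with least element, \<open>a\<^sup>\<perp>\<close> is the principal ideal generated by \<open>a\<^sup>*\<close>, so
  \<open>a\<^sup>\<perp> = b\<^sup>\<perp>\<close> iff \<open>a\<^sup>* = b\<^sup>*\<close>.\<close>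

lemma order_isomorphic_perp_classes:
  assumes onto: "h ` P = Q"
    and perp_subset_iff: "\<And>a b. a \<in> P \<Longrightarrow> b \<in> P \<Longrightarrow> perp P le z b \<subseteq> perp P le z a \<longleftrightarrow> h a \<subseteq> h b"
  shows "order_isomorphic (perp_classes P le z) (class_le P le z) Q (\<subseteq>)"
proof -
  have class_eq: "perp_class P le z x = {y \<in> P. h y = h x}" if "x \<in> P" for x
    using perp_subset_iff[OF _ that] perp_subset_iff[OF that]
    unfolding perp_class_def by (blast intro: subset_antisym)
  define f where "f X = the_elem (h ` X)" for X
  have f_class: "f (perp_class P le z x) = h x" if "x \<in> P" for x
  proof -
    have "h ` perp_class P le z x = {h x}" using class_eq[OF that] that by auto
    then show ?thesis by (simp add: f_def)
  qed
  have "bij_betw f (perp_classes P le z) Q"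
    unfolding bij_betw_def inj_on_def perp_classes_def
    using f_class class_eq onto by (auto simp: image_iff)
  moreover have "class_le P le z (perp_class P le z x) (perp_class P le z y) \<longleftrightarrow> h x \<subseteq> h y"
    if "x \<in> P" "y \<in> P" for x y
    using that perp_subset_iff unfolding class_le_def class_eq[OF that(1)] class_eq[OF that(2)] by auto
  ultimately show ?thesis
    unfolding order_isomorphic_def perp_classes_def using f_class by (intro exI[of _ f]) auto
qed

locale poset_with_least =
  fixes P :: "'a set" and le :: "'a \<Rightarrow> 'a \<Rightarrow> bool" and z :: 'a
  assumes refl: "x \<in> P \<Longrightarrow> le x x"
    and trans: "le x y \<Longrightarrow> le y w \<Longrightarrow> le x w"
    and antisym: "le x y \<Longrightarrow> le y x \<Longrightarrow> x = y"
    and least_in: "z \<in> P"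
    and least: "x \<in> P \<Longrightarrow> le z x"
begin

lemma is_pseudocomplement_iff_perp:
  assumes "a \<in> P"
  shows "is_pseudocomplement P le z a c \<longleftrightarrow> c \<in> P \<and> perp P le z a = {x \<in> P. le x c}"
proof
  assume c: "is_pseudocomplement P le z a c"
  have "lower_bounds P le {a, x} = {z}" if "x \<in> P" "le x c" for x
  proof -
    have "lower_bounds P le {a, x} \<subseteq> lower_bounds P le {a, c}"
      using \<open>le x c\<close> trans unfolding lower_bounds_def by blast
    moreover have "z \<in> lower_bounds P le {a, x}"
      using least_in least assms that(1) unfolding lower_bounds_def by blast
    ultimately show ?thesis using c unfolding is_pseudocomplement_def by blast
  qed
  with c show "c \<in> P \<and> perp P le z a = {x \<in> P. le x c}"
    unfolding is_pseudocomplement_def perp_def by blast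
next
  assume "c \<in> P \<and> perp P le z a = {x \<in> P. le x c}"
  then show "is_pseudocomplement P le z a c"
    using refl unfolding is_pseudocomplement_def perp_def by blast
qed

lemma pcompl_eqI:
  assumes "is_pseudocomplement P le z a c"
  shows "pcompl P le z a = c"
  unfolding pcompl_def
proof (rule the_equality)
  fix c' assume "is_pseudocomplement P le z a c'"
  with assms show "c' = c" unfolding is_pseudocomplement_def by (blast intro: antisym)
qed (fact assms)

lemma perp_eq_iff_pcompl_eq:
  assumes "pseudocomplemented P le z" and "a \<in> P" and "b \<in> P"
  shows "perp P le z a = perp P le z b \<longleftrightarrow> pcompl P le z a = pcompl P le z b"
proof -
  obtain c d where c: "is_pseudocomplement P le z a c" and d: "is_pseudocomplement P le z b d"
    using assms unfolding pseudocomplemented_def by blast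
  then have "c \<in> P" "d \<in> P" and "perp P le z a = {x \<in> P. le x c}" "perp P le z b = {x \<in> P. le x d}"
    using is_pseudocomplement_iff_perp assms(2,3) by auto
  then have "perp P le z a = perp P le z b \<longleftrightarrow> c = d"
    using refl antisym by blast
  then show ?thesis using pcompl_eqI c d by simp
qed

end

lemma blowup_carrier_iff:
  "x \<in> blowup_carrier n k \<longleftrightarrow> fst x \<subseteq> {..<n} \<and> 1 \<le> snd x \<and> snd x \<le> chain_len n k (fst x)"
  by (cases x) (simp add: blowup_carrier_def)

lemma blowup_le_fst: "blowup_le u v \<Longrightarrow> fst u \<subseteq> fst v"
  by (auto simp: blowup_le_def)

lemma chain_bottom_le: "C \<subseteq> fst a \<Longrightarrow> 1 \<le> snd a \<Longrightarrow> blowup_le (C, 1) a"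
  by (auto simp: blowup_le_def)

lemma le_chain_top:
  "a \<in> blowup_carrier n k \<Longrightarrow> fst a \<subseteq> C \<Longrightarrow> blowup_le a (C, chain_len n k C)"
  by (auto simp: blowup_le_def blowup_carrier_iff)

lemma blowup_eq_bot: "x \<in> blowup_carrier n k \<Longrightarrow> fst x = {} \<Longrightarrow> x = blowup_bot"
  by (cases x) (auto simp: blowup_carrier_def chain_len_def blowup_bot_def)

lemma blowup_eq_top: "x \<in> blowup_carrier n k \<Longrightarrow> fst x = {..<n} \<Longrightarrow> x = blowup_top n"
  by (cases x) (auto simp: blowup_carrier_def chain_len_def blowup_top_def)

context
  fixes n :: nat and k :: "nat set \<Rightarrow> nat"
  assumes k_pos: "\<And>A. A \<subseteq> {..<n} \<Longrightarrow> A \<noteq> {} \<Longrightarrow> A \<noteq> {..<n} \<Longrightarrow> 1 \<le> k A"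
begin

lemma chain_len_pos: "A \<subseteq> {..<n} \<Longrightarrow> 1 \<le> chain_len n k A"
  using k_pos[of A] by (simp add: chain_len_def)

lemma chain_bottom_in_blowup: "A \<subseteq> {..<n} \<Longrightarrow> (A, 1) \<in> blowup_carrier n k"
  using chain_len_pos[of A] by (simp add: blowup_carrier_def)

lemma chain_top_in_blowup: "A \<subseteq> {..<n} \<Longrightarrow> (A, chain_len n k A) \<in> blowup_carrier n k"
  using chain_len_pos[of A] by (simp add: blowup_carrier_def)

lemma fst_image_blowup_carrier: "fst ` blowup_carrier n k = Pow {..<n}"
proof
  show "Pow {..<n} \<subseteq> fst ` blowup_carrier n k"
    using chain_bottom_in_blowup by (metis PowD fst_conv image_eqI subsetI)
qed (auto simp: blowup_carrier_iff)

lemma poset_with_least_blowup: "poset_with_least (blowup_carrier n k) blowup_le blowup_bot"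
proof
  show "blowup_bot \<in> blowup_carrier n k"
    using chain_bottom_in_blowup[of "{}"] by (simp add: blowup_bot_def)
  show "blowup_le blowup_bot x" if "x \<in> blowup_carrier n k" for x
    using blowup_eq_bot[OF that] that
    by (cases "fst x = {}") (auto simp: blowup_le_def blowup_bot_def blowup_carrier_iff)
qed (auto simp: blowup_le_def)

lemma poset_with_least_blowup_dual:
  "poset_with_least (blowup_carrier n k) blowup_dual_le (blowup_top n)"
proof
  show "blowup_top n \<in> blowup_carrier n k"
    using chain_bottom_in_blowup[of "{..<n}"] by (simp add: blowup_top_def)
  show "blowup_dual_le (blowup_top n) x" if "x \<in> blowup_carrier n k" for x
    using blowup_eq_top[OF that] that
    by (cases "fst x = {..<n}")
      (auto simp: blowup_dual_le_def blowup_le_def blowup_top_def blowup_carrier_iff)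
qed (auto simp: blowup_dual_le_def blowup_le_def)

interpretation blowup: poset_with_least "blowup_carrier n k" blowup_le blowup_bot
  by (fact poset_with_least_blowup)

interpretation blowup_dual: poset_with_least "blowup_carrier n k" blowup_dual_le "blowup_top n"
  by (fact poset_with_least_blowup_dual)

lemma lower_bounds_eq_bot_iff:
  assumes "a \<in> blowup_carrier n k" and "b \<in> blowup_carrier n k"
  shows "lower_bounds (blowup_carrier n k) blowup_le {a, b} = {blowup_bot} \<longleftrightarrow> fst a \<inter> fst b = {}"
proof
  have "(fst a \<inter> fst b, 1) \<in> lower_bounds (blowup_carrier n k) blowup_le {a, b}"
    using assms chain_bottom_in_blowup[of "fst a \<inter> fst b"] chain_bottom_le
    by (auto simp: lower_bounds_def blowup_carrier_iff)
  moreover assume "lower_bounds (blowup_carrier n k) blowup_le {a, b} = {blowup_bot}"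
  ultimately show "fst a \<inter> fst b = {}" by (simp add: blowup_bot_def)
next
  assume disjoint: "fst a \<inter> fst b = {}"
  show "lower_bounds (blowup_carrier n k) blowup_le {a, b} = {blowup_bot}"
  proof (intro equalityI subsetI)
    fix x assume "x \<in> lower_bounds (blowup_carrier n k) blowup_le {a, b}"
    then have "x \<in> blowup_carrier n k" and "fst x = {}"
      using disjoint by (auto simp: lower_bounds_def dest!: blowup_le_fst)
    then show "x \<in> {blowup_bot}" by (simp add: blowup_eq_bot)
  qed (use assms blowup.least blowup.least_in in \<open>auto simp: lower_bounds_def\<close>)
qed

lemma dual_lower_bounds_eq_top_iff:
  assumes "a \<in> blowup_carrier n k" and "b \<in> blowup_carrier n k"
  shows "lower_bounds (blowup_carrier n k) blowup_dual_le {a, b} = {blowup_top n}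
    \<longleftrightarrow> fst a \<union> fst b = {..<n}"
proof
  have "(fst a \<union> fst b, chain_len n k (fst a \<union> fst b))
      \<in> lower_bounds (blowup_carrier n k) blowup_dual_le {a, b}"
    using assms chain_top_in_blowup le_chain_top
    by (auto simp: lower_bounds_def blowup_dual_le_def blowup_carrier_iff)
  moreover assume "lower_bounds (blowup_carrier n k) blowup_dual_le {a, b} = {blowup_top n}"
  ultimately show "fst a \<union> fst b = {..<n}" by (simp add: blowup_top_def)
next
  assume covering: "fst a \<union> fst b = {..<n}"
  show "lower_bounds (blowup_carrier n k) blowup_dual_le {a, b} = {blowup_top n}"
  proof (intro equalityI subsetI)
    fix x assume "x \<in> lower_bounds (blowup_carrier n k) blowup_dual_le {a, b}"
    then have "x \<in> blowup_carrier n k" and "fst x = {..<n}"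
      using covering
      by (auto simp: lower_bounds_def blowup_dual_le_def blowup_carrier_iff dest!: blowup_le_fst)
    then show "x \<in> {blowup_top n}" by (simp add: blowup_eq_top)
  qed (use assms blowup_dual.least blowup_dual.least_in in \<open>auto simp: lower_bounds_def\<close>)
qed

lemma perp_blowup:
  "a \<in> blowup_carrier n k \<Longrightarrow>
    perp (blowup_carrier n k) blowup_le blowup_bot a = {b \<in> blowup_carrier n k. fst a \<inter> fst b = {}}"
  unfolding perp_def using lower_bounds_eq_bot_iff by blast

lemma perp_blowup_dual:
  "a \<in> blowup_carrier n k \<Longrightarrow>
    perp (blowup_carrier n k) blowup_dual_le (blowup_top n) a
      = {b \<in> blowup_carrier n k. fst a \<union> fst b = {..<n}}"
  unfolding perp_def using dual_lower_bounds_eq_top_iff by blast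

lemma perp_blowup_subset_iff:
  assumes a: "a \<in> blowup_carrier n k" and b: "b \<in> blowup_carrier n k"
  shows "perp (blowup_carrier n k) blowup_le blowup_bot b
      \<subseteq> perp (blowup_carrier n k) blowup_le blowup_bot a \<longleftrightarrow> fst a \<subseteq> fst b"
proof
  assume "perp (blowup_carrier n k) blowup_le blowup_bot b
      \<subseteq> perp (blowup_carrier n k) blowup_le blowup_bot a"
  moreover have "({..<n} - fst b, 1) \<in> perp (blowup_carrier n k) blowup_le blowup_bot b"
    using perp_blowup[OF b] chain_bottom_in_blowup by auto
  ultimately have "({..<n} - fst b, 1) \<in> perp (blowup_carrier n k) blowup_le blowup_bot a"
    by blast
  then have "fst a \<inter> ({..<n} - fst b) = {}"
    by (simp add: perp_blowup[OF a])
  then show "fst a \<subseteq> fst b"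
    using a by (auto simp: blowup_carrier_iff)
qed (auto simp: perp_blowup a b)

lemma perp_blowup_dual_subset_iff:
  assumes a: "a \<in> blowup_carrier n k" and b: "b \<in> blowup_carrier n k"
  shows "perp (blowup_carrier n k) blowup_dual_le (blowup_top n) b
      \<subseteq> perp (blowup_carrier n k) blowup_dual_le (blowup_top n) a \<longleftrightarrow> fst b \<subseteq> fst a"
proof
  assume "perp (blowup_carrier n k) blowup_dual_le (blowup_top n) b
      \<subseteq> perp (blowup_carrier n k) blowup_dual_le (blowup_top n) a"
  moreover have "({..<n} - fst b, 1) \<in> perp (blowup_carrier n k) blowup_dual_le (blowup_top n) b"
    using perp_blowup_dual[OF b] chain_bottom_in_blowup b by (auto simp: blowup_carrier_iff)
  ultimately have "({..<n} - fst b, 1) \<in> perp (blowup_carrier n k) blowup_dual_le (blowup_top n) a"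
    by blast
  then have "fst a \<union> ({..<n} - fst b) = {..<n}"
    by (simp add: perp_blowup_dual[OF a])
  then show "fst b \<subseteq> fst a"
    using b by (auto simp: blowup_carrier_iff)
next
  assume "fst b \<subseteq> fst a"
  moreover have "fst a \<subseteq> {..<n}" using a by (simp add: blowup_carrier_iff)
  ultimately show "perp (blowup_carrier n k) blowup_dual_le (blowup_top n) b
      \<subseteq> perp (blowup_carrier n k) blowup_dual_le (blowup_top n) a"
    unfolding perp_blowup_dual[OF a] perp_blowup_dual[OF b] by blast
qed

lemma is_pseudocomplement_blowup:
  assumes a: "a \<in> blowup_carrier n k"
  shows "is_pseudocomplement (blowup_carrier n k) blowup_le blowup_bot a
    ({..<n} - fst a, chain_len n k ({..<n} - fst a))" (is "is_pseudocomplement _ _ _ _ ?c")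
proof -
  have "fst a \<inter> fst x = {} \<longleftrightarrow> blowup_le x ?c" if x: "x \<in> blowup_carrier n k" for x
  proof
    assume "fst a \<inter> fst x = {}"
    with x have "fst x \<subseteq> {..<n} - fst a" by (auto simp: blowup_carrier_iff)
    then show "blowup_le x ?c" by (rule le_chain_top[OF x])
  next
    assume "blowup_le x ?c"
    then show "fst a \<inter> fst x = {}" by (auto dest!: blowup_le_fst)
  qed
  moreover have "?c \<in> blowup_carrier n k" by (simp add: chain_top_in_blowup)
  ultimately show ?thesis
    unfolding blowup.is_pseudocomplement_iff_perp[OF a] perp_blowup[OF a] by blast
qed

lemma is_pseudocomplement_blowup_dual:
  assumes a: "a \<in> blowup_carrier n k"
  shows "is_pseudocomplement (blowup_carrier n k) blowup_dual_le (blowup_top n) a ({..<n} - fst a, 1)"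
    (is "is_pseudocomplement _ _ _ _ ?c")
proof -
  have "fst a \<union> fst x = {..<n} \<longleftrightarrow> blowup_dual_le x ?c" if x: "x \<in> blowup_carrier n k" for x
  proof
    assume "fst a \<union> fst x = {..<n}"
    then have "{..<n} - fst a \<subseteq> fst x" by blast
    moreover have "1 \<le> snd x" using x by (simp add: blowup_carrier_iff)
    ultimately show "blowup_dual_le x ?c"
      unfolding blowup_dual_le_def by (rule chain_bottom_le)
  next
    assume "blowup_dual_le x ?c"
    then have "{..<n} - fst a \<subseteq> fst x"
      unfolding blowup_dual_le_def by (metis blowup_le_fst fst_conv)
    with a x show "fst a \<union> fst x = {..<n}" by (auto simp: blowup_carrier_iff)
  qed
  moreover have "?c \<in> blowup_carrier n k" using chain_bottom_in_blowup[of "{..<n} - fst a"] by simp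
  ultimately show ?thesis
    unfolding blowup_dual.is_pseudocomplement_iff_perp[OF a] perp_blowup_dual[OF a] by blast
qed

lemma pseudocomplemented_blowup: "pseudocomplemented (blowup_carrier n k) blowup_le blowup_bot"
  using is_pseudocomplement_blowup unfolding pseudocomplemented_def by blast

lemma pseudocomplemented_blowup_dual:
  "pseudocomplemented (blowup_carrier n k) blowup_dual_le (blowup_top n)"
  using is_pseudocomplement_blowup_dual unfolding pseudocomplemented_def by blast

lemma order_isomorphic_perp_classes_blowup:
  "order_isomorphic (perp_classes (blowup_carrier n k) blowup_le blowup_bot)
     (class_le (blowup_carrier n k) blowup_le blowup_bot) (boolean_carrier n) (\<subseteq>)"
  using fst_image_blowup_carrier perp_blowup_subset_iff unfolding boolean_carrier_def
  by (rule order_isomorphic_perp_classes)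

lemma order_isomorphic_perp_classes_blowup_dual:
  "order_isomorphic (perp_classes (blowup_carrier n k) blowup_dual_le (blowup_top n))
     (class_le (blowup_carrier n k) blowup_dual_le (blowup_top n)) (boolean_carrier n) (\<subseteq>)"
  unfolding boolean_carrier_def
proof (rule order_isomorphic_perp_classes)
  show "(\<lambda>x. {..<n} - fst x) ` blowup_carrier n k = Pow {..<n}"
  proof
    show "Pow {..<n} \<subseteq> (\<lambda>x. {..<n} - fst x) ` blowup_carrier n k"
    proof
      fix B assume "B \<in> Pow {..<n}"
      then have "B = {..<n} - fst ({..<n} - B, 1)" and "({..<n} - B, 1) \<in> blowup_carrier n k"
        using chain_bottom_in_blowup[of "{..<n} - B"] by auto
      then show "B \<in> (\<lambda>x. {..<n} - fst x) ` blowup_carrier n k" by (rule image_eqI)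
    qed
  qed blast
  show "perp (blowup_carrier n k) blowup_dual_le (blowup_top n) b
      \<subseteq> perp (blowup_carrier n k) blowup_dual_le (blowup_top n) a
    \<longleftrightarrow> {..<n} - fst a \<subseteq> {..<n} - fst b"
    if "a \<in> blowup_carrier n k" "b \<in> blowup_carrier n k" for a b
    using perp_blowup_dual_subset_iff[OF that] that by (auto simp: blowup_carrier_iff)
qed

end

theorem mainTheorem3:
  fixes n :: nat and k :: "nat set \<Rightarrow> nat"
  assumes n3: "n \<ge> 3"
    and k_pos: "\<And>A. A \<subseteq> {..<n} \<Longrightarrow> A \<noteq> {} \<Longrightarrow> A \<noteq> {..<n} \<Longrightarrow> 1 \<le> k A"
  shows "pseudocomplemented (blowup_carrier n k) blowup_le blowup_bot
       \<and> pseudocomplemented (blowup_carrier n k) blowup_dual_le (blowup_top n)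
       \<and> order_isomorphic
           (perp_classes (blowup_carrier n k) blowup_le blowup_bot)
           (class_le (blowup_carrier n k) blowup_le blowup_bot)
           (boolean_carrier n) (\<subseteq>)
       \<and> order_isomorphic
           (perp_classes (blowup_carrier n k) blowup_dual_le (blowup_top n))
           (class_le (blowup_carrier n k) blowup_dual_le (blowup_top n))
           (boolean_carrier n) (\<subseteq>)
       \<and> (\<forall>a\<in>blowup_carrier n k. \<forall>b\<in>blowup_carrier n k.
            perp (blowup_carrier n k) blowup_le blowup_bot a
              = perp (blowup_carrier n k) blowup_le blowup_bot b
            \<longleftrightarrow> pcompl (blowup_carrier n k) blowup_le blowup_bot a
              = pcompl (blowup_carrier n k) blowup_le blowup_bot b)"
  using pseudocomplemented_blowup[OF k_pos] pseudocomplemented_blowup_dual[OF k_pos]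
    order_isomorphic_perp_classes_blowup[OF k_pos]
    order_isomorphic_perp_classes_blowup_dual[OF k_pos]
    poset_with_least.perp_eq_iff_pcompl_eq[OF poset_with_least_blowup[OF k_pos]
      pseudocomplemented_blowup[OF k_pos]]
  by (intro conjI ballI)

end
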